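(* Let $k=\delta n$ with $\delta = \omega(\log^{-1/3} n)$, let $G=(X\dot\cup Y,E)$ be a $k$-regular bipartite graph on $2n$ vertices, let $(S,T)$ be a cut of $G$, and let $G_1\sim G(p_1)$ with $p_1 = \frac{\log n - \log\log\log\log n}{k}$. W.v.h.p. the following holds: if $A\subseteq V$ is a partite set with $|A|\le n^{0.9}$ such that every $x\in A$ satisfies $\deg^{\mathrm{Par}}_{G_1}(x)\ge \frac{1}{1000}\log n$, then $A$ has at least $|A|\cdot\frac{1}{2000}\log n$ parallel neighbors in $G_1$.
   Context: $V=X\cup Y$. A set $A$ is partite if $A\subseteq X$ or $A\subseteq Y$. A cut is a pair $(S,T)$ with $S\subseteq X$, $T\subseteq Y$; cross edges w.r.t. $(S,T)$ are edges joining $S$ to $Y\setminus T$ or $X\setminus S$ to $T$, and all other edges are parallel. $\deg^{\mathrm{Par}}_{G_1}(x)$ is the number of parallel edges of $G_1$ incident to $x$; a parallel neighbor of $A$ in $G_1$ is a vertex joined to some vertex of $A$ by a parallel edge of $G_1$. $G(p)$ retains each edge of $G$ independently with probability $p$. A sequence of events $A_n$ holds with very high probability (w.v.h.p.) if $\log(\mathbb P[A_n^c])=-\Omega(\log n)$. *)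

theory Defs
  imports "HOL-Probability.Probability"
begin

definition bip_regular :: "'v set \<Rightarrow> 'v set \<Rightarrow> ('v \<times> 'v) set \<Rightarrow> nat \<Rightarrow> bool" where
  "bip_regular X Y E k \<longleftrightarrow> finite X \<and> finite Y \<and> X \<inter> Y = {} \<and> E \<subseteq> X \<times> Y \<and>
     (\<forall>x\<in>X. card {y. (x, y) \<in> E} = k) \<and> (\<forall>y\<in>Y. card {x. (x, y) \<in> E} = k)"

definition cross_edge :: "'v set \<Rightarrow> 'v set \<Rightarrow> 'v \<times> 'v \<Rightarrow> bool" where
  "cross_edge S T e \<longleftrightarrow> (fst e \<in> S \<and> snd e \<notin> T) \<or> (fst e \<notin> S \<and> snd e \<in> T)"

definition parallel_edge :: "'v set \<Rightarrow> 'v set \<Rightarrow> 'v \<times> 'v \<Rightarrow> bool" where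
  "parallel_edge S T e \<longleftrightarrow> \<not> cross_edge S T e"

definition par_deg :: "'v set \<Rightarrow> 'v set \<Rightarrow> ('v \<times> 'v) set \<Rightarrow> 'v \<Rightarrow> nat" where
  "par_deg S T G1 v = card {e \<in> G1. parallel_edge S T e \<and> (fst e = v \<or> snd e = v)}"

definition par_neighbors :: "'v set \<Rightarrow> 'v set \<Rightarrow> ('v \<times> 'v) set \<Rightarrow> 'v set \<Rightarrow> 'v set" where
  "par_neighbors S T G1 A =
     {w. \<exists>a\<in>A. \<exists>e\<in>G1. parallel_edge S T e \<and> (e = (a, w) \<or> e = (w, a))}"

definition random_subgraph :: "('v \<times> 'v) set \<Rightarrow> real \<Rightarrow> ('v \<times> 'v) set pmf" where
  "random_subgraph E p = map_pmf (\<lambda>f. {e \<in> E. f e}) (Pi_pmf E False (\<lambda>_. bernoulli_pmf p))"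

end

theory Submission
  imports Defs "HOL-Real_Asymp.Real_Asymp"
begin

(* If a partite set A of size a violates the conclusion, pick a set W of c = floor(a L / 2000)
   vertices containing all its parallel neighbours (L = ln n). Since A is partite, the parallel
   edges at distinct vertices of A are distinct, so G1 contains m = a * ceiling(L / 1000) edges
   between A and W. A union bound over a, A, W and these edge sets bounds the failure probability
   by the sum of C(2n,a) C(2n,c) C(2ac,m) p^m. As p <= L^(4/3) / n, the edge sets contribute at
   most (e a p)^m <= (e a p)^(2c), so each of the c vertices of W costs a factor n^(-1/20); since
   c >= 100 a this beats the n^(2a) choices of A. *)

lemma power_div_fact_le_exp:
  fixes x :: real
  assumes "0 \<le> x"
  shows "x ^ j / fact j \<le> exp x"
proof -
  have "(\<Sum>i\<in>{j}. x ^ i / fact i) \<le> (\<Sum>i. x ^ i / fact i)"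
    using assms summable_exp[of x] by (intro sum_le_suminf) (auto simp: divide_inverse mult.commute)
  then show ?thesis
    by (simp add: exp_def scaleR_conv_of_real divide_inverse mult.commute)
qed

lemma power_div_fact_le:
  fixes x :: real
  assumes "0 \<le> x" "0 < j"
  shows "x ^ j / fact j \<le> (exp 1 * x / j) ^ j"
proof -
  have "x ^ j / fact j = (x / j) ^ j * (real j ^ j / fact j)"
    using assms by (simp add: power_divide)
  also have "\<dots> \<le> (x / j) ^ j * exp (real j)"
    using assms by (intro mult_left_mono power_div_fact_le_exp) auto
  also have "\<dots> = (x / j) ^ j * exp 1 ^ j"
    using exp_of_nat_mult[of j "1::real"] by simp
  also have "\<dots> = (exp 1 * x / j) ^ j"
    by (simp add: power_mult_distrib power_divide)
  finally show ?thesis .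
qed

lemma binomial_le_exp_ratio_power:
  assumes "0 < k"
  shows "real (n choose k) \<le> (exp 1 * n / k) ^ k"
proof -
  have "real (n choose k) * fact k \<le> real n ^ k"
    by (metis binomial_fact_pow of_nat_fact of_nat_le_iff of_nat_mult of_nat_power)
  then have "real (n choose k) \<le> real n ^ k / fact k"
    by (simp add: field_simps)
  also have "\<dots> \<le> (exp 1 * n / k) ^ k"
    using assms by (intro power_div_fact_le) auto
  finally show ?thesis .
qed

lemma binomial_le_power: "n choose k \<le> n ^ k"
  by (cases "k \<le> n") (simp_all add: binomial_le_pow binomial_eq_0)

lemma set_pmf_random_subgraph_subset: "G \<in> set_pmf (random_subgraph E p) \<Longrightarrow> G \<subseteq> E"
  by (auto simp: random_subgraph_def)

lemma prob_random_subgraph_superset_le: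
  assumes E: "finite E" and p: "0 \<le> p" "p \<le> 1"
  shows "measure_pmf.prob (random_subgraph E p) {G. F \<subseteq> G} \<le> p ^ card F"
proof (cases "F \<subseteq> E")
  case False
  then have "(\<lambda>f. {e \<in> E. f e}) -` {G. F \<subseteq> G} = {}" by auto
  then show ?thesis unfolding random_subgraph_def measure_map_pmf using p by simp
next
  case True
  define B where "B e = (if e \<in> F then {True} else UNIV)" for e
  have "(\<lambda>f. {e \<in> E. f e}) -` {G. F \<subseteq> G} = Pi E B"
    using True by (auto simp: B_def Pi_def split: if_splits)
  then have "measure_pmf.prob (random_subgraph E p) {G. F \<subseteq> G} =
      (\<Prod>e\<in>E. measure_pmf.prob (bernoulli_pmf p) (B e))"
    unfolding random_subgraph_def measure_map_pmf using E by (simp add: measure_Pi_pmf_Pi)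
  also have "\<dots> = (\<Prod>e\<in>E. if e \<in> F then p else 1)"
    using p by (intro prod.cong) (auto simp: B_def measure_pmf_single)
  also have "\<dots> = p ^ card F"
    using True E by (simp add: prod.If_cases Int_absorb1)
  finally show ?thesis by simp
qed

lemma prob_random_subgraph_superset_of_some_le:
  fixes p :: real
  assumes "finite E" "0 \<le> p" "p \<le> 1" "finite \<F>" "\<And>F. F \<in> \<F> \<Longrightarrow> card F = m"
  shows "measure_pmf.prob (random_subgraph E p) {G. \<exists>F\<in>\<F>. F \<subseteq> G} \<le> card \<F> * p ^ m"
proof -
  have "{G. \<exists>F\<in>\<F>. F \<subseteq> G} = (\<Union>F\<in>\<F>. {G. F \<subseteq> G})" by blast
  then have "measure_pmf.prob (random_subgraph E p) {G. \<exists>F\<in>\<F>. F \<subseteq> G}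
      \<le> (\<Sum>F\<in>\<F>. measure_pmf.prob (random_subgraph E p) {G. F \<subseteq> G})"
    using assms(4) by (simp add: measure_pmf.finite_measure_subadditive_finite)
  also have "\<dots> \<le> (\<Sum>F\<in>\<F>. p ^ m)"
  proof (rule sum_mono)
    fix F assume "F \<in> \<F>"
    then show "measure_pmf.prob (random_subgraph E p) {G. F \<subseteq> G} \<le> p ^ m"
      using prob_random_subgraph_superset_le[OF assms(1-3), of F] assms(5) by simp
  qed
  finally show ?thesis by simp
qed

definition edge_sets_between :: "'a set \<Rightarrow> nat \<Rightarrow> nat \<Rightarrow> nat \<Rightarrow> ('a \<times> 'a) set set" where
  "edge_sets_between V a c m = {F. \<exists>A W. A \<subseteq> V \<and> card A = a \<and> W \<subseteq> V \<and> card W = c \<and>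
     F \<subseteq> A \<times> W \<union> W \<times> A \<and> card F = m}"

lemma card_of_edge_sets_between: "F \<in> edge_sets_between V a c m \<Longrightarrow> card F = m"
  by (auto simp: edge_sets_between_def)

lemma
  assumes "finite V"
  shows finite_edge_sets_between: "finite (edge_sets_between V a c m)"
    and card_edge_sets_between_le:
      "card (edge_sets_between V a c m) \<le> (card V choose a) * (card V choose c) * (2 * a * c choose m)"
proof -
  define \<S> where "\<S> b = {A. A \<subseteq> V \<and> card A = b}" for b
  define P where "P A W = {F. F \<subseteq> A \<times> W \<union> W \<times> A \<and> card F = m}" for A W :: "'a set"
  have eq: "edge_sets_between V a c m = (\<Union>A\<in>\<S> a. \<Union>W\<in>\<S> c. P A W)"
    by (auto simp: edge_sets_between_def \<S>_def P_def)
  have card_\<S>: "finite (\<S> b)" "card (\<S> b) = card V choose b" for b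
    using assms by (simp_all add: \<S>_def n_subsets)
  have P: "finite (P A W)" "card (P A W) \<le> 2 * a * c choose m" if "A \<in> \<S> a" "W \<in> \<S> c" for A W
  proof -
    have fin: "finite (A \<times> W \<union> W \<times> A)"
      using that assms by (auto simp: \<S>_def intro: finite_subset)
    then show "finite (P A W)"
      by (auto simp: P_def intro: finite_subset[of _ "Pow (A \<times> W \<union> W \<times> A)"])
    have "card (A \<times> W \<union> W \<times> A) \<le> card (A \<times> W) + card (W \<times> A)"
      by (rule card_Un_le)
    also have "\<dots> = 2 * a * c"
      using that by (simp add: \<S>_def card_cartesian_product)
    finally show "card (P A W) \<le> 2 * a * c choose m"
      unfolding P_def n_subsets[OF fin] by (rule binomial_right_mono)
  qed
  show "finite (edge_sets_between V a c m)"
    unfolding eq using card_\<S> P by blast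
  have "card (edge_sets_between V a c m) \<le> (\<Sum>A\<in>\<S> a. \<Sum>W\<in>\<S> c. card (P A W))"
    unfolding eq
    by (intro order_trans[OF card_UN_le] sum_mono card_UN_le card_\<S>)
  also have "\<dots> \<le> (\<Sum>A\<in>\<S> a. \<Sum>W\<in>\<S> c. 2 * a * c choose m)"
    using P by (intro sum_mono) auto
  finally show "card (edge_sets_between V a c m) \<le> (card V choose a) * (card V choose c) * (2 * a * c choose m)"
    by (simp add: card_\<S>)
qed

lemma sum_par_deg_partite:
  assumes fin: "finite X" "finite Y" and disj: "X \<inter> Y = {}" and G: "G \<subseteq> X \<times> Y"
    and A: "A \<subseteq> X \<or> A \<subseteq> Y"
  shows "(\<Sum>x\<in>A. par_deg S T G x) = card {e \<in> G. parallel_edge S T e \<and> (fst e \<in> A \<or> snd e \<in> A)}"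
proof -
  define P where "P x = {e \<in> G. parallel_edge S T e \<and> (fst e = x \<or> snd e = x)}" for x
  have "finite G"
    using fin G finite_subset by blast
  then have finP: "finite (P x)" for x
    by (simp add: P_def)
  have "finite A"
    using fin A finite_subset by blast
  have "P x \<inter> P y = {}" if "x \<in> A" "y \<in> A" "x \<noteq> y" for x y
    using that A G disj by (fastforce simp: P_def)
  then have "card (\<Union>x\<in>A. P x) = (\<Sum>x\<in>A. card (P x))"
    using \<open>finite A\<close> finP by (intro card_UN_disjoint) auto
  moreover have "(\<Union>x\<in>A. P x) = {e \<in> G. parallel_edge S T e \<and> (fst e \<in> A \<or> snd e \<in> A)}"
    by (auto simp: P_def)
  ultimately show ?thesis
    by (simp add: par_deg_def P_def)
qed

lemma par_edges_incident_subset: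
  "{e \<in> G. parallel_edge S T e \<and> (fst e \<in> A \<or> snd e \<in> A)}
     \<subseteq> A \<times> par_neighbors S T G A \<union> par_neighbors S T G A \<times> A"
  by (fastforce simp: par_neighbors_def)

lemma par_neighbors_subset:
  assumes "G \<subseteq> X \<times> Y"
  shows "par_neighbors S T G A \<subseteq> X \<union> Y"
  using assms by (auto simp: par_neighbors_def)

lemma edge_set_between_if_few_par_neighbors:
  assumes fin: "finite X" "finite Y" and disj: "X \<inter> Y = {}" and G: "G \<subseteq> X \<times> Y"
    and A: "A \<subseteq> X \<or> A \<subseteq> Y"
    and deg: "\<forall>x\<in>A. d \<le> par_deg S T G x"
    and few: "card (par_neighbors S T G A) \<le> c" and c: "c \<le> card (X \<union> Y)"
  shows "\<exists>F\<in>edge_sets_between (X \<union> Y) (card A) c (card A * d). F \<subseteq> G"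
proof -
  let ?N = "par_neighbors S T G A"
  let ?I = "{e \<in> G. parallel_edge S T e \<and> (fst e \<in> A \<or> snd e \<in> A)}"
  obtain W where W: "?N \<subseteq> W" "W \<subseteq> X \<union> Y" "card W = c"
    using exists_subset_between[OF few c par_neighbors_subset[OF G]] fin by auto
  have "card A * d = (\<Sum>x\<in>A. d)"
    by simp
  also have "\<dots> \<le> card ?I"
    unfolding sum_par_deg_partite[OF fin disj G A, symmetric] using deg by (intro sum_mono) auto
  finally obtain F where F: "F \<subseteq> ?I" "card F = card A * d"
    by (meson obtain_subset_with_card_n)
  then have "F \<subseteq> A \<times> W \<union> W \<times> A"
    using par_edges_incident_subset W(1) by blast
  moreover have "A \<subseteq> X \<union> Y"
    using A by blast
  ultimately have "F \<in> edge_sets_between (X \<union> Y) (card A) c (card A * d)"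
    using W F by (auto simp: edge_sets_between_def)
  moreover have "F \<subseteq> G"
    using F by blast
  ultimately show ?thesis ..
qed

lemma edge_set_between_if_poor_par_expansion:
  fixes L :: real and n :: nat
  assumes fin: "finite X" "finite Y" and disj: "X \<inter> Y = {}" and G: "G \<subseteq> X \<times> Y"
    and L: "0 \<le> L" "real n powr 0.9 * L \<le> real (card (X \<union> Y))"
    and A: "A \<subseteq> X \<or> A \<subseteq> Y" "real (card A) \<le> real n powr 0.9"
    and deg: "\<forall>x\<in>A. L / 1000 \<le> real (par_deg S T G x)"
    and few: "real (card (par_neighbors S T G A)) < real (card A) * L / 2000"
  shows "card A \<in> {1..nat \<lfloor>real n powr 0.9\<rfloor>}"
    and "\<exists>F\<in>edge_sets_between (X \<union> Y) (card A) (nat \<lfloor>real (card A) * L / 2000\<rfloor>)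
      (card A * nat \<lceil>L / 1000\<rceil>). F \<subseteq> G"
proof -
  show "card A \<in> {1..nat \<lfloor>real n powr 0.9\<rfloor>}"
    using A(2) few by (cases "card A = 0") (auto simp: le_nat_floor Suc_le_eq)
  have "real (card A) * L \<le> real n powr 0.9 * L"
    using A(2) L(1) by (intro mult_right_mono) auto
  then have "real (nat \<lfloor>real (card A) * L / 2000\<rfloor>) \<le> real (card (X \<union> Y))"
    using L by (intro order_trans[OF of_nat_floor]) auto
  then show "\<exists>F\<in>edge_sets_between (X \<union> Y) (card A) (nat \<lfloor>real (card A) * L / 2000\<rfloor>)
      (card A * nat \<lceil>L / 1000\<rceil>). F \<subseteq> G"
    using deg few by (intro edge_set_between_if_few_par_neighbors[OF fin disj G A(1)])
      (auto simp: le_nat_floor)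
qed

lemma binomial_mult_power_le:
  fixes p :: real
  assumes "0 < c" "2 * c \<le> m" "0 \<le> p" "exp 1 * real a * p \<le> 1"
  shows "real (2 * a * c choose m) * p ^ m \<le> (exp 1 * real a * p) ^ (2 * c)"
proof -
  have "0 < m"
    using assms by linarith
  have "2 * a * c \<le> a * m"
    using mult_le_mono2[OF assms(2), of a] by (simp add: ac_simps)
  then have "real (2 * a * c) / real m \<le> real a"
    using \<open>0 < m\<close> by (simp add: divide_le_eq flip: of_nat_mult)
  then have "real (2 * a * c) / real m * (exp 1 * p) \<le> real a * (exp 1 * p)"
    using assms by (intro mult_right_mono) auto
  then have ratio: "exp 1 * real (2 * a * c) / real m * p \<le> exp 1 * real a * p"
    by (simp add: ac_simps)
  have "real (2 * a * c choose m) * p ^ m \<le> (exp 1 * real (2 * a * c) / real m) ^ m * p ^ m"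
    using \<open>0 < m\<close> assms by (intro mult_right_mono binomial_le_exp_ratio_power) auto
  also have "\<dots> = (exp 1 * real (2 * a * c) / real m * p) ^ m"
    by (simp only: power_mult_distrib)
  also have "\<dots> \<le> (exp 1 * real a * p) ^ m"
    using ratio assms by (intro power_mono) auto
  also have "\<dots> \<le> (exp 1 * real a * p) ^ (2 * c)"
    using assms by (intro power_decreasing) auto
  finally show ?thesis .
qed

lemma vertex_factor_le:
  fixes n a c :: nat and L p :: real
  assumes L: "0 < L" and a: "1 \<le> a" "real a \<le> real n powr 0.9"
    and c: "real a * L / 4000 \<le> real c" and p: "0 \<le> p"
      "8000 * exp 1 ^ 3 * real n powr 1.9 * p\<^sup>2 / L \<le> real n powr (-1/20)"
  shows "exp 1 * real (2 * n) / real c * (exp 1 * real a * p)\<^sup>2 \<le> real n powr (-1/20)"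
proof -
  have "0 < real a * L / 4000"
    using L a by simp
  then have "0 < c"
    using c by linarith
  have "exp 1 * real (2 * n) / real c * (exp 1 * real a * p)\<^sup>2
      = 2 * exp 1 ^ 3 * real n * real a ^ 2 * p\<^sup>2 / real c"
    by (simp add: power2_eq_square power3_eq_cube)
  also have "\<dots> \<le> 2 * exp 1 ^ 3 * real n * real a ^ 2 * p\<^sup>2 / (real a * L / 4000)"
    using c a L \<open>0 < c\<close> by (intro divide_left_mono) auto
  also have "\<dots> = 8000 * exp 1 ^ 3 * (real n * real a) * p\<^sup>2 / L"
    using a L by (simp add: power2_eq_square field_simps)
  also have "\<dots> \<le> 8000 * exp 1 ^ 3 * (real n * real n powr 0.9) * p\<^sup>2 / L"
    using a L by (intro divide_right_mono mult_right_mono mult_left_mono) auto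
  also have "real n * real n powr 0.9 = real n powr 1.9"
    by (simp add: powr_mult_base)
  finally show ?thesis
    using p(2) by simp
qed

lemma card_edge_sets_between_mult_power_le:
  fixes n a c m :: nat and L p :: real
  assumes V: "finite V" "card V = 2 * n" and n: "2 \<le> n" and L: "400000 \<le> L"
    and a: "1 \<le> a" "real a \<le> real n powr 0.9"
    and c: "real a * L / 4000 \<le> real c" and m: "2 * c \<le> m"
    and p: "0 \<le> p" "exp 1 * real n powr 0.9 * p \<le> 1"
      "8000 * exp 1 ^ 3 * real n powr 1.9 * p\<^sup>2 / L \<le> real n powr (-1/20)"
  shows "real (card (edge_sets_between V a c m)) * p ^ m \<le> real n powr (-3)"
proof -
  define \<rho> where "\<rho> = exp 1 * real a * p"
  have "real a * 400000 \<le> real a * L"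
    using L by (intro mult_left_mono) auto
  then have c_large: "100 * real a \<le> real c"
    using c by linarith
  then have "0 < c"
    using a by auto
  have \<rho>: "0 \<le> \<rho>" "\<rho> \<le> 1"
    using p a mult_right_mono[OF a(2), of "exp 1 * p"] by (auto simp: \<rho>_def ac_simps)
  have "2 * n choose a \<le> (2 * n) ^ a"
    by (rule binomial_le_power)
  also have "\<dots> \<le> (n * n) ^ a"
    using n by (intro power_mono) auto
  finally have binom_a: "real (2 * n choose a) \<le> real n ^ (2 * a)"
    by (metis of_nat_le_iff of_nat_power power2_eq_square power_mult)
  have "real (card (edge_sets_between V a c m))
      \<le> real (2 * n choose a) * real (2 * n choose c) * real (2 * a * c choose m)"
    using card_edge_sets_between_le[OF V(1), of a c m] V(2) by (simp flip: of_nat_mult)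
  then have "real (card (edge_sets_between V a c m)) * p ^ m
      \<le> real (2 * n choose a) * (real (2 * n choose c) * (real (2 * a * c choose m) * p ^ m))"
    using p by (simp add: mult.assoc mult_right_mono flip: mult.assoc)
  also have "\<dots> \<le> real n ^ (2 * a) * ((exp 1 * real (2 * n) / real c) ^ c * \<rho> ^ (2 * c))"
    using binom_a binomial_le_exp_ratio_power[OF \<open>0 < c\<close>, of "2 * n"]
      binomial_mult_power_le[OF \<open>0 < c\<close> m p(1)] \<rho> p
    by (intro mult_mono) (auto simp: \<rho>_def)
  also have "\<dots> = real n ^ (2 * a) * (exp 1 * real (2 * n) / real c * \<rho>\<^sup>2) ^ c"
    by (simp only: power_mult[of \<rho> 2 c] power_mult_distrib)
  also have "\<dots> \<le> real n ^ (2 * a) * (real n powr (-1/20)) ^ c"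
    using vertex_factor_le[of L a n c p] L a c p \<rho>
    by (intro mult_left_mono power_mono) (auto simp: \<rho>_def)
  also have "\<dots> = real n powr real (2 * a) * real n powr (real c * (-1/20))"
    using n powr_realpow[of "real n" "2 * a"] by (simp add: powr_power)
  also have "\<dots> = real n powr (real (2 * a) - real c / 20)"
    by (simp add: powr_add[symmetric])
  also have "\<dots> \<le> real n powr (-3)"
    using n c_large a by (intro powr_mono) auto
  finally show ?thesis .
qed

lemma witness_size_bounds:
  fixes L :: real
  assumes L: "400000 \<le> L" and a: "1 \<le> a"
  shows "real a * L / 4000 \<le> real (nat \<lfloor>real a * L / 2000\<rfloor>)"
    and "2 * nat \<lfloor>real a * L / 2000\<rfloor> \<le> a * nat \<lceil>L / 1000\<rceil>"
proof -
  have "real a * 400000 \<le> real a * L"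
    using L by (intro mult_left_mono) auto
  moreover have "real a * L / 2000 - 1 \<le> real (nat \<lfloor>real a * L / 2000\<rfloor>)"
    using L by simp
  moreover have "1 \<le> real a"
    using a by simp
  ultimately show "real a * L / 4000 \<le> real (nat \<lfloor>real a * L / 2000\<rfloor>)"
    by linarith
  have "real (nat \<lfloor>real a * L / 2000\<rfloor>) \<le> real a * L / 2000"
    using L by (intro of_nat_floor) simp
  then have "real (2 * nat \<lfloor>real a * L / 2000\<rfloor>) \<le> real a * (L / 1000)"
    by simp
  also have "\<dots> \<le> real a * real (nat \<lceil>L / 1000\<rceil>)"
    by (intro mult_left_mono real_nat_ceiling_ge) simp
  finally show "2 * nat \<lfloor>real a * L / 2000\<rfloor> \<le> a * nat \<lceil>L / 1000\<rceil>"
    by (simp flip: of_nat_mult)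
qed

lemma prob_poor_par_expansion_le:
  fixes X Y S T :: "'v set" and E :: "('v \<times> 'v) set" and n :: nat and L p :: real
  assumes fin: "finite X" "finite Y" and disj: "X \<inter> Y = {}" and E: "E \<subseteq> X \<times> Y"
    and size: "card (X \<union> Y) = 2 * n"
    and n: "2 \<le> n" and L: "400000 \<le> L" "real n powr 0.9 * L \<le> real n"
    and p: "0 \<le> p" "p \<le> 1" "exp 1 * real n powr 0.9 * p \<le> 1"
      "8000 * exp 1 ^ 3 * real n powr 1.9 * p\<^sup>2 / L \<le> real n powr (-1/20)"
  shows "measure_pmf.prob (random_subgraph E p)
      {G1. \<not> (\<forall>A. (A \<subseteq> X \<or> A \<subseteq> Y) \<longrightarrow> real (card A) \<le> real n powr 0.9 \<longrightarrow>
               (\<forall>x\<in>A. real (par_deg S T G1 x) \<ge> L / 1000) \<longrightarrow>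
               real (card (par_neighbors S T G1 A)) \<ge> real (card A) * L / 2000)}
    \<le> real n powr (-2)" (is "measure_pmf.prob ?M ?Bad \<le> _")
proof -
  define K where "K = nat \<lfloor>real n powr 0.9\<rfloor>"
  define \<F> where "\<F> a = edge_sets_between (X \<union> Y) a (nat \<lfloor>real a * L / 2000\<rfloor>)
    (a * nat \<lceil>L / 1000\<rceil>)" for a
  have "finite E"
    using fin E finite_subset by blast
  have K: "real K \<le> real n powr 0.9"
    by (simp add: K_def of_nat_floor)
  have "?Bad \<inter> set_pmf ?M \<subseteq> (\<Union>a\<in>{1..K}. {G. \<exists>F\<in>\<F> a. F \<subseteq> G})"
  proof
    fix G assume G: "G \<in> ?Bad \<inter> set_pmf ?M"
    then obtain A where A: "A \<subseteq> X \<or> A \<subseteq> Y" "real (card A) \<le> real n powr 0.9"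
        "\<forall>x\<in>A. L / 1000 \<le> real (par_deg S T G x)"
        "real (card (par_neighbors S T G A)) < real (card A) * L / 2000"
      by (auto simp: not_le)
    have "G \<subseteq> X \<times> Y"
      using G E set_pmf_random_subgraph_subset by blast
    moreover have "0 \<le> L" "real n powr 0.9 * L \<le> real (card (X \<union> Y))"
      using L size by auto
    ultimately show "G \<in> (\<Union>a\<in>{1..K}. {G. \<exists>F\<in>\<F> a. F \<subseteq> G})"
      using edge_set_between_if_poor_par_expansion[OF fin disj _ _ _ A] unfolding K_def \<F>_def
      by blast
  qed
  then have "measure_pmf.prob ?M ?Bad \<le> measure_pmf.prob ?M (\<Union>a\<in>{1..K}. {G. \<exists>F\<in>\<F> a. F \<subseteq> G})"
    by (subst measure_Int_set_pmf[symmetric]) (rule measure_pmf.finite_measure_mono; simp)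
  also have "\<dots> \<le> (\<Sum>a\<in>{1..K}. measure_pmf.prob ?M {G. \<exists>F\<in>\<F> a. F \<subseteq> G})"
    by (rule measure_pmf.finite_measure_subadditive_finite) auto
  also have "\<dots> \<le> (\<Sum>a\<in>{1..K}. real (card (\<F> a)) * p ^ (a * nat \<lceil>L / 1000\<rceil>))"
    using \<open>finite E\<close> fin p
    by (intro sum_mono prob_random_subgraph_superset_of_some_le)
      (auto simp: \<F>_def finite_edge_sets_between card_of_edge_sets_between)
  also have "\<dots> \<le> (\<Sum>a\<in>{1..K}. real n powr (-3))"
    using fin size n L(1) K p witness_size_bounds[OF L(1)] unfolding \<F>_def
    by (intro sum_mono card_edge_sets_between_mult_power_le) auto
  also have "\<dots> \<le> real n * real n powr (-3)"
    using K powr_mono[of "0.9" 1 "real n"] n by (simp add: mult_right_mono)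
  also have "\<dots> = real n powr (-2)"
    by (simp add: powr_mult_base)
  finally show ?thesis .
qed

lemma eventually_edge_probability_le:
  fixes k :: "nat \<Rightarrow> nat"
  assumes "filterlim (\<lambda>n. (real (k n) / real n) * ln (real n) powr (1/3)) at_top sequentially"
  shows "\<forall>\<^sub>F n in sequentially.
    0 \<le> (ln (real n) - ln (ln (ln (ln (real n))))) / real (k n) \<and>
    (ln (real n) - ln (ln (ln (ln (real n))))) / real (k n) \<le> ln (real n) powr (4/3) / real n"
proof -
  have "\<forall>\<^sub>F n in sequentially. 1 \<le> real (k n) / real n * ln (real n) powr (1/3)"
    using assms by (simp add: filterlim_at_top)
  moreover have "\<forall>\<^sub>F n in sequentially. 0 < ln (real n)"
    by real_asymp
  moreover have "\<forall>\<^sub>F n in sequentially. 0 \<le> ln (ln (ln (ln (real n))))"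
    by real_asymp
  moreover have "\<forall>\<^sub>F n in sequentially. ln (ln (ln (ln (real n)))) \<le> ln (real n)"
    by real_asymp
  ultimately show ?thesis
  proof eventually_elim
    case (elim n)
    define L where "L = ln (real n)"
    have "0 < real n"
      using elim(2) by (auto intro: ccontr)
    then have k: "real n \<le> real (k n) * L powr (1/3)"
      using elim(1) by (simp add: L_def field_simps)
    then have "0 < real (k n)"
      using \<open>0 < real n\<close> by (auto intro: ccontr)
    have "(L - ln (ln (ln L))) / real (k n) \<le> L / real (k n)"
      using elim(3) \<open>0 < real (k n)\<close> by (simp add: L_def divide_right_mono)
    also have "\<dots> \<le> L * L powr (1/3) / real n"
      using k elim(2) \<open>0 < real n\<close> \<open>0 < real (k n)\<close>
      by (simp add: L_def field_simps mult_left_mono)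
    also have "\<dots> = L powr (4/3) / real n"
      using elim(2) by (simp add: L_def powr_mult_base)
    finally show ?case
      using elim(4) \<open>0 < real (k n)\<close> by (simp add: L_def)
  qed
qed

lemma eventually_prob_poor_par_expansion_le:
  fixes X Y S T :: "nat \<Rightarrow> 'v set" and E :: "nat \<Rightarrow> ('v \<times> 'v) set" and p :: "nat \<Rightarrow> real"
  assumes fin: "\<And>n. finite (X n)" "\<And>n. finite (Y n)" and disj: "\<And>n. X n \<inter> Y n = {}"
    and E: "\<And>n. E n \<subseteq> X n \<times> Y n" and size: "\<And>n. card (X n \<union> Y n) = 2 * n"
    and p: "\<forall>\<^sub>F n in sequentially. 0 \<le> p n \<and> p n \<le> ln (real n) powr (4/3) / real n"
  shows "\<forall>\<^sub>F n in sequentially.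
    measure_pmf.prob (random_subgraph (E n) (p n))
      {G1. \<not> (\<forall>A. (A \<subseteq> X n \<or> A \<subseteq> Y n) \<longrightarrow> real (card A) \<le> real n powr 0.9 \<longrightarrow>
               (\<forall>x\<in>A. real (par_deg (S n) (T n) G1 x) \<ge> ln (real n) / 1000) \<longrightarrow>
               real (card (par_neighbors (S n) (T n) G1 A)) \<ge> real (card A) * ln (real n) / 2000)}
    \<le> real n powr (-2)"
proof -
  define q where "q n = ln (real n) powr (4/3) / real n" for n :: nat
  have "\<forall>\<^sub>F n in sequentially. 2 \<le> n"
    by (rule eventually_ge_at_top)
  moreover have "\<forall>\<^sub>F n in sequentially. 400000 \<le> ln (real n)"
    by real_asymp
  moreover have "\<forall>\<^sub>F n in sequentially. real n powr 0.9 * ln (real n) \<le> real n"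
    by real_asymp
  moreover have "\<forall>\<^sub>F n in sequentially. q n \<le> 1"
    unfolding q_def by real_asymp
  moreover have "\<forall>\<^sub>F n in sequentially. exp 1 * real n powr 0.9 * q n \<le> 1"
    unfolding q_def by real_asymp
  moreover have "\<forall>\<^sub>F n in sequentially.
      8000 * exp 1 ^ 3 * real n powr 1.9 * (q n)\<^sup>2 / ln (real n) \<le> real n powr (-1/20)"
    unfolding q_def by real_asymp
  ultimately show ?thesis
    using p
  proof eventually_elim
    case (elim n)
    have p: "0 \<le> p n" "p n \<le> q n"
      using elim(7) by (simp_all add: q_def)
    have "exp 1 * real n powr 0.9 * p n \<le> 1"
      using p by (intro order_trans[OF _ elim(5)] mult_left_mono) auto
    moreover have "8000 * exp 1 ^ 3 * real n powr 1.9 * (p n)\<^sup>2 / ln (real n) \<le> real n powr (-1/20)"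
      using p elim(2) by (intro order_trans[OF _ elim(6)] divide_right_mono mult_left_mono power_mono) auto
    ultimately show ?case
      using elim(1-4) p by (intro prob_poor_par_expansion_le[OF fin disj E size]) auto
  qed
qed

theorem lemma3p6:
  fixes X Y :: "nat \<Rightarrow> nat set"
    and E :: "nat \<Rightarrow> (nat \<times> nat) set"
    and S T :: "nat \<Rightarrow> nat set"
    and k :: "nat \<Rightarrow> nat"
  assumes delta: "filterlim (\<lambda>n. (real (k n) / real n) * ln (real n) powr (1/3)) at_top sequentially"
    and graph: "\<And>n. bip_regular (X n) (Y n) (E n) (k n)"
    and size: "\<And>n. card (X n \<union> Y n) = 2 * n"
    and cut: "\<And>n. S n \<subseteq> X n \<and> T n \<subseteq> Y n"
  shows "\<exists>c>0. \<forall>\<^sub>F n in sequentially.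
    measure_pmf.prob
      (random_subgraph (E n) ((ln (real n) - ln (ln (ln (ln (real n))))) / real (k n)))
      {G1. \<not> (\<forall>A. (A \<subseteq> X n \<or> A \<subseteq> Y n) \<longrightarrow> real (card A) \<le> real n powr 0.9 \<longrightarrow>
               (\<forall>x\<in>A. real (par_deg (S n) (T n) G1 x) \<ge> ln (real n) / 1000) \<longrightarrow>
               real (card (par_neighbors (S n) (T n) G1 A)) \<ge> real (card A) * ln (real n) / 2000)}
    \<le> real n powr (- c)"
  using graph size eventually_edge_probability_le[OF delta]
  by (intro exI[of _ 2] conjI eventually_prob_poor_par_expansion_le) (auto simp: bip_regular_def)

end
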